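(* For an abelian group $A$, the following are equivalent: (i) $A$ is finitely generated; (ii) $A$ is SB-generated; (iii) $A$ has uncountable cofinality.
   Context: A subset of a group $G$ is strongly bounded if it has finite diameter in every left-invariant metric on $G$; a group is SB-generated if it is generated by a strongly bounded subset. A group has uncountable cofinality if it cannot be written as the union of a strictly increasing sequence $H_1\subsetneq H_2\subsetneq\cdots$ of subgroups. *)

theory Defs
  imports "HOL-Algebra.Algebra"
begin

definition left_inv_metric :: "('a, 'b) monoid_scheme \<Rightarrow> ('a \<Rightarrow> 'a \<Rightarrow> real) \<Rightarrow> bool" where
  "left_inv_metric G d \<longleftrightarrow>
     (\<forall>x\<in>carrier G. \<forall>y\<in>carrier G. d x y = 0 \<longleftrightarrow> x = y) \<and>
     (\<forall>x\<in>carrier G. \<forall>y\<in>carrier G. d x y = d y x) \<and>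
     (\<forall>x\<in>carrier G. \<forall>y\<in>carrier G. \<forall>z\<in>carrier G. d x z \<le> d x y + d y z) \<and>
     (\<forall>g\<in>carrier G. \<forall>x\<in>carrier G. \<forall>y\<in>carrier G. d (g \<otimes>\<^bsub>G\<^esub> x) (g \<otimes>\<^bsub>G\<^esub> y) = d x y)"

definition strongly_bounded :: "('a, 'b) monoid_scheme \<Rightarrow> 'a set \<Rightarrow> bool" where
  "strongly_bounded G S \<longleftrightarrow> S \<subseteq> carrier G \<and>
     (\<forall>d. left_inv_metric G d \<longrightarrow> (\<exists>C. \<forall>x\<in>S. \<forall>y\<in>S. d x y \<le> C))"

definition finitely_generated :: "('a, 'b) monoid_scheme \<Rightarrow> bool" where
  "finitely_generated G \<longleftrightarrow> (\<exists>S. finite S \<and> S \<subseteq> carrier G \<and> generate G S = carrier G)"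

definition SB_generated :: "('a, 'b) monoid_scheme \<Rightarrow> bool" where
  "SB_generated G \<longleftrightarrow> (\<exists>S. strongly_bounded G S \<and> generate G S = carrier G)"

definition uncountable_cofinality :: "('a, 'b) monoid_scheme \<Rightarrow> bool" where
  "uncountable_cofinality G \<longleftrightarrow>
     \<not> (\<exists>H :: nat \<Rightarrow> 'a set. (\<forall>n. subgroup (H n) G) \<and> (\<forall>n. H n \<subset> H (Suc n)) \<and>
           (\<Union>n. H n) = carrier G)"

end

theory Submission
  imports Defs "HOL-Computational_Algebra.Primes"
begin

(*
  A finite set has finite diameter in every metric, so finitely generated groups are SB-generated.
  If G is the union of a strictly increasing sequence of subgroups H n, then
  d x y = 1 + (LEAST n. x^-1 y \<in> H n) for x \<noteq> y is a left-invariant metric in which every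
  bounded set lies in some H n; such a set generates a proper subgroup, so SB-generated groups
  have uncountable cofinality.

  Conversely let A be abelian (written additively here) of uncountable cofinality and let D n
  be an increasing sequence of subgroups with union C. A Zorn-maximal subgroup K with
  K \<inter> C \<subseteq> D 0 gives every element a nonzero multiple in K + C, so the subgroups
  {a. n! a \<in> K + D n} exhaust A; hence one of them is A, and n! C \<subseteq> D n by the modular law.
  If moreover p A \<subseteq> D 0 for a prime p, K can be chosen to contain p A, whence K + C = A and
  the sequence D n stabilizes. Feeding in sequences of finitely generated subgroups that grow by
  one generator at a time, the first statement yields m > 0 with m A inside a finitely generated
  subgroup, and the second lowers m to m / p for each prime p dividing m, down to m = 1.
*)

section \<open>Strongly bounded sets and chains of subgroups\<close>

lemma finite_imp_strongly_bounded:
  assumes "finite S" "S \<subseteq> carrier G"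
  shows "strongly_bounded G S"
proof -
  have "\<exists>C. \<forall>x\<in>S. \<forall>y\<in>S. d x y \<le> C" for d :: "'a \<Rightarrow> 'a \<Rightarrow> real"
  proof -
    have "bdd_above (case_prod d ` (S \<times> S))"
      using assms(1) by (intro bdd_above_finite) simp
    then show ?thesis
      unfolding bdd_above_def by auto
  qed
  then show ?thesis
    using assms(2) unfolding strongly_bounded_def by blast
qed

lemma finitely_generated_imp_SB_generated:
  "finitely_generated G \<Longrightarrow> SB_generated G"
  unfolding finitely_generated_def SB_generated_def
  using finite_imp_strongly_bounded by blast

lemma (in group) subgroup_Union_chain:
  assumes "CC \<noteq> {}" "subset.chain {K. subgroup K G} CC"
  shows "subgroup (\<Union>CC) G"
proof -
  have sub: "subgroup K G" if "K \<in> CC" for K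
    using assms(2) that unfolding subset.chain_def by blast
  have comparable: "K \<subseteq> L \<or> L \<subseteq> K" if "K \<in> CC" "L \<in> CC" for K L
    using assms(2) that unfolding subset.chain_def by blast
  show ?thesis
  proof (rule subgroupI)
    show "\<Union>CC \<subseteq> carrier G"
      using sub subgroup.subset by (meson Union_least)
    obtain K where "K \<in> CC"
      using assms(1) by blast
    then show "\<Union>CC \<noteq> {}"
      using sub[THEN subgroup.one_closed] by blast
  next
    fix a assume "a \<in> \<Union>CC"
    then show "inv a \<in> \<Union>CC"
      using sub[THEN subgroup.m_inv_closed] by blast
  next
    fix a b assume "a \<in> \<Union>CC" "b \<in> \<Union>CC"
    then obtain K L where "K \<in> CC" "L \<in> CC" "a \<in> K" "b \<in> L"
      by blast
    then show "a \<otimes> b \<in> \<Union>CC"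
      using comparable[of K L] sub[THEN subgroup.m_closed] by blast
  qed
qed

lemma (in group) subgroup_UN_mono:
  fixes D :: "'i::linorder \<Rightarrow> 'a set"
  assumes "mono D" "\<And>n. subgroup (D n) G"
  shows "subgroup (\<Union>n. D n) G"
proof (rule subgroup_Union_chain)
  have "D i \<subseteq> D j \<or> D j \<subseteq> D i" for i j
    using le_cases[of i j] monoD[OF assms(1)] by blast
  then show "subset.chain {K. subgroup K G} (range D)"
    using assms(2) unfolding subset.chain_def by auto
qed simp

lemma mono_exists_strict_subchain:
  fixes H :: "nat \<Rightarrow> 'a set"
  assumes "mono H" and unbounded: "\<And>n. \<exists>m. H n \<subset> H m"
  obtains g where "\<And>k. H (g k) \<subset> H (g (Suc k))" "(\<Union>k. H (g k)) = (\<Union>n. H n)"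
proof -
  define f where "f n = (SOME m. H n \<subset> H m)" for n
  have f: "H n \<subset> H (f n)" for n
    unfolding f_def by (rule someI_ex) (rule unbounded)
  have "n < f n" for n
  proof (rule ccontr)
    assume "\<not> n < f n"
    then have "H (f n) \<subseteq> H n"
      using assms(1) by (simp add: monoD)
    then show False
      using f[of n] by blast
  qed
  define g where "g k = (f ^^ k) 0" for k
  have "strict_mono g"
    unfolding strict_mono_Suc_iff g_def using \<open>\<And>n. n < f n\<close> by simp
  then have "H k \<subseteq> H (g k)" for k
    using monoD[OF assms(1)] strict_mono_imp_increasing by blast
  then have "(\<Union>k. H (g k)) = (\<Union>n. H n)"
    by blast
  moreover have "H (g k) \<subset> H (g (Suc k))" for k
    unfolding g_def using f by simp
  ultimately show thesis
    using that by blast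
qed

locale exhausting_subgroup_chain = group +
  fixes H :: "nat \<Rightarrow> 'a set"
  assumes mono_chain: "mono H"
    and subgroup_chain: "subgroup (H n) G"
    and UN_chain: "(\<Union>n. H n) = carrier G"
begin

definition level :: "'a \<Rightarrow> nat" where
  "level x = (LEAST n. x \<in> H n)"

lemma mem_chain_iff_level_le:
  assumes "x \<in> carrier G"
  shows "x \<in> H n \<longleftrightarrow> level x \<le> n"
proof
  assume "x \<in> H n"
  then show "level x \<le> n"
    unfolding level_def by (rule Least_le)
next
  assume "level x \<le> n"
  have "\<exists>n. x \<in> H n"
    using assms UN_chain by blast
  then have "x \<in> H (level x)"
    unfolding level_def by (rule LeastI_ex)
  then show "x \<in> H n"
    using mono_chain \<open>level x \<le> n\<close> by (auto dest: monoD)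
qed

lemma level_inv:
  assumes "x \<in> carrier G"
  shows "level (inv x) = level x"
proof -
  have "level (inv x) \<le> n \<longleftrightarrow> level x \<le> n" for n
    using assms subgroup.m_inv_closed[OF subgroup_chain, of _ n]
    by (metis inv_closed inv_inv mem_chain_iff_level_le)
  then show ?thesis
    by (metis le_antisym order_refl)
qed

lemma level_mult:
  assumes "x \<in> carrier G" "y \<in> carrier G"
  shows "level (x \<otimes> y) \<le> max (level x) (level y)"
  using assms subgroup.m_closed[OF subgroup_chain]
  by (metis m_closed max.cobounded1 max.cobounded2 mem_chain_iff_level_le)

definition chain_dist :: "'a \<Rightarrow> 'a \<Rightarrow> real" where
  "chain_dist x y = (if x = y then 0 else 1 + real (level (inv x \<otimes> y)))"

lemma left_inv_metric_chain_dist: "left_inv_metric G chain_dist"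
  unfolding left_inv_metric_def
proof (intro conjI ballI)
  fix x y assume xy: "x \<in> carrier G" "y \<in> carrier G"
  show "chain_dist x y = 0 \<longleftrightarrow> x = y"
    unfolding chain_dist_def by simp
  have "inv y \<otimes> x = inv (inv x \<otimes> y)"
    using xy by (simp add: inv_mult_group)
  then show "chain_dist x y = chain_dist y x"
    using xy level_inv[of "inv x \<otimes> y"] unfolding chain_dist_def by auto
next
  fix x y z assume xyz: "x \<in> carrier G" "y \<in> carrier G" "z \<in> carrier G"
  have "inv x \<otimes> z = (inv x \<otimes> y) \<otimes> (inv y \<otimes> z)"
    using xyz by (simp add: m_assoc) (simp add: m_assoc[symmetric])
  then have "level (inv x \<otimes> z) \<le> max (level (inv x \<otimes> y)) (level (inv y \<otimes> z))"
    using xyz level_mult by simp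
  then show "chain_dist x z \<le> chain_dist x y + chain_dist y z"
    unfolding chain_dist_def by auto
next
  fix g x y assume gxy: "g \<in> carrier G" "x \<in> carrier G" "y \<in> carrier G"
  have "inv (g \<otimes> x) \<otimes> (g \<otimes> y) = inv x \<otimes> y"
    using gxy by (simp add: inv_mult_group m_assoc) (simp add: m_assoc[symmetric])
  then show "chain_dist (g \<otimes> x) (g \<otimes> y) = chain_dist x y"
    using gxy unfolding chain_dist_def by simp
qed

lemma strongly_bounded_imp_subset_chain:
  assumes "strongly_bounded G S"
  obtains n where "S \<subseteq> H n"
proof (cases "S = {}")
  case False
  then obtain s0 where s0: "s0 \<in> S"
    by blast
  have S: "S \<subseteq> carrier G"
    using assms unfolding strongly_bounded_def by blast
  obtain C where C: "\<And>x y. x \<in> S \<Longrightarrow> y \<in> S \<Longrightarrow> chain_dist x y \<le> C"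
    using assms left_inv_metric_chain_dist unfolding strongly_bounded_def by blast
  define n where "n = max (level s0) (nat \<lceil>C\<rceil>)"
  have "s \<in> H n" if s: "s \<in> S" for s
  proof -
    have "level (inv s0 \<otimes> s) \<le> nat \<lceil>C\<rceil>"
    proof (cases "s = s0")
      case True
      then show ?thesis
        using s S subgroup.one_closed[OF subgroup_chain] mem_chain_iff_level_le[of \<one> 0]
        by auto
    next
      case False
      then have "1 + real (level (inv s0 \<otimes> s)) \<le> C"
        using C[OF s0 s] unfolding chain_dist_def by simp
      then show ?thesis
        by linarith
    qed
    moreover have "s = s0 \<otimes> (inv s0 \<otimes> s)"
      using subsetD[OF S s] subsetD[OF S s0] by (simp add: m_assoc[symmetric])
    moreover have "level (s0 \<otimes> (inv s0 \<otimes> s)) \<le> max (level s0) (level (inv s0 \<otimes> s))"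
      using s s0 S by (intro level_mult) auto
    ultimately have "level s \<le> n"
      unfolding n_def by (metis max.mono order.refl order_trans)
    then show ?thesis
      using s S mem_chain_iff_level_le by blast
  qed
  then show thesis
    using that by blast
qed (use that in blast)

lemma exists_chain_eq_carrier:
  assumes "uncountable_cofinality G"
  shows "\<exists>n. H n = carrier G"
proof (rule ccontr)
  assume proper: "\<nexists>n. H n = carrier G"
  have "\<exists>m. H n \<subset> H m" for n
  proof -
    have "H n \<subset> carrier G"
      using proper subgroup.subset[OF subgroup_chain] by blast
    then obtain x where x: "x \<in> carrier G" "x \<notin> H n"
      by blast
    then have "n \<le> level x" "x \<in> H (level x)"
      using mem_chain_iff_level_le[OF x(1)] by auto
    then have "H n \<subseteq> H (level x)" "x \<in> H (level x)"
      using mono_chain by (auto dest: monoD)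
    then show ?thesis
      using x(2) by blast
  qed
  then obtain g where "\<And>k. H (g k) \<subset> H (g (Suc k))" "(\<Union>k. H (g k)) = (\<Union>n. H n)"
    using mono_exists_strict_subchain[OF mono_chain] by blast
  then have "\<not> uncountable_cofinality G"
    unfolding uncountable_cofinality_def not_not using subgroup_chain UN_chain
    by (intro exI[of _ "\<lambda>k. H (g k)"]) simp
  then show False
    using assms by contradiction
qed

end

lemma (in group) SB_generated_imp_uncountable_cofinality:
  assumes "SB_generated G"
  shows "uncountable_cofinality G"
  unfolding uncountable_cofinality_def
proof
  assume "\<exists>H. (\<forall>n. subgroup (H n) G) \<and> (\<forall>n. H n \<subset> H (Suc n)) \<and> (\<Union>n. H n) = carrier G"
  then obtain H :: "nat \<Rightarrow> 'a set" where
    H: "\<And>n. subgroup (H n) G" "\<And>n. H n \<subset> H (Suc n)" "(\<Union>n. H n) = carrier G"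
    by blast
  interpret exhausting_subgroup_chain G H
    using H is_group
    by (intro exhausting_subgroup_chain.intro exhausting_subgroup_chain_axioms.intro)
      (auto simp: mono_iff_le_Suc)
  obtain S where S: "strongly_bounded G S" "generate G S = carrier G"
    using assms unfolding SB_generated_def by blast
  obtain n where "S \<subseteq> H n"
    using strongly_bounded_imp_subset_chain[OF S(1)] by blast
  then have "carrier G \<subseteq> H n"
    using generate_subgroup_incl[OF _ H(1)] S(2) by blast
  then show False
    using H(2)[of n] subgroup.subset[OF H(1)] by blast
qed

section \<open>Abelian groups of uncountable cofinality\<close>

lemma (in group) subgroup_nat_pow_closed:
  assumes "subgroup Q G" "h \<in> Q"
  shows "h [^] (n::nat) \<in> Q"
  using subgroup_int_pow_closed[OF assms, of "int n"] by (simp add: int_pow_int)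

lemma (in group) subgroup_nat_pow_dvd_closed:
  assumes "subgroup Q G" "a \<in> carrier G" "a [^] m \<in> Q" "m dvd n"
  shows "a [^] (n::nat) \<in> Q"
proof -
  obtain k where "n = m * k"
    using assms(4) by (rule dvdE)
  then have "a [^] n = (a [^] m) [^] k"
    using assms(2) by (simp add: nat_pow_pow)
  then show ?thesis
    using subgroup_nat_pow_closed[OF assms(1,3)] by simp
qed

lemma (in group) subgroup_int_pow_abs_closed:
  assumes "subgroup Q G" "a \<in> carrier G" "a [^] (t::int) \<in> Q"
  shows "a [^] nat \<bar>t\<bar> \<in> Q"
proof (cases "t \<ge> 0")
  case True
  then show ?thesis
    using assms(3) by (simp add: pow_nat)
next
  case False
  then have "a [^] nat \<bar>t\<bar> = inv (a [^] t)"
    using assms(2) by (simp add: pow_nat int_pow_neg)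
  then show ?thesis
    using subgroup.m_inv_closed[OF assms(1,3)] by simp
qed

lemma (in group) coprime_int_pows_in_subgroup:
  assumes "subgroup Q G" "a \<in> carrier G" "a [^] (s::int) \<in> Q" "a [^] (t::int) \<in> Q"
    and "coprime s t"
  shows "a \<in> Q"
proof -
  obtain u v where uv: "u * s + v * t = 1"
    using bezout_int[of s t] assms(5) by auto
  have "a = a [^] (u * s + v * t)"
    using assms(2) by (simp add: uv)
  also have "\<dots> = (a [^] s) [^] u \<otimes> (a [^] t) [^] v"
    using assms(2) by (simp add: int_pow_mult int_pow_pow mult.commute)
  finally show ?thesis
    using assms(1,3,4) by (metis subgroup.m_closed subgroup_int_pow_closed)
qed

lemma (in comm_group) subgroup_pow_preimage:
  assumes "subgroup Q G"
  shows "subgroup {a \<in> carrier G. a [^] (n::nat) \<in> Q} G"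
proof (rule subgroupI)
  show "{a \<in> carrier G. a [^] n \<in> Q} \<noteq> {}"
    using subgroup.one_closed[OF assms] by force
next
  fix a assume "a \<in> {a \<in> carrier G. a [^] n \<in> Q}"
  then show "inv a \<in> {a \<in> carrier G. a [^] n \<in> Q}"
    using subgroup.m_inv_closed[OF assms] by (simp add: nat_pow_inv)
next
  fix a b assume "a \<in> {a \<in> carrier G. a [^] n \<in> Q}" "b \<in> {a \<in> carrier G. a [^] n \<in> Q}"
  then show "a \<otimes> b \<in> {a \<in> carrier G. a [^] n \<in> Q}"
    using subgroup.m_closed[OF assms] by (simp add: nat_pow_distrib)
qed auto

lemma (in group) subset_set_mult_subgroup:
  assumes "subgroup H G" "K \<subseteq> carrier G"
  shows "K \<subseteq> K <#> H"
proof
  fix x assume "x \<in> K"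
  then have "x = x \<otimes> \<one>" "\<one> \<in> H"
    using assms subgroup.one_closed by auto
  then show "x \<in> K <#> H"
    unfolding set_mult_def using \<open>x \<in> K\<close> by blast
qed

lemma (in group) set_mult_Int_subgroup_subset:
  assumes "subgroup K G" "subgroup C G" "subgroup D G" "D \<subseteq> C" "K \<inter> C \<subseteq> D"
  shows "(K <#> D) \<inter> C \<subseteq> D"
proof
  fix x assume "x \<in> (K <#> D) \<inter> C"
  then obtain k d where kd: "k \<in> K" "d \<in> D" "x = k \<otimes> d" "x \<in> C"
    unfolding set_mult_def by blast
  have carr: "k \<in> carrier G" "d \<in> carrier G"
    using kd assms(1,3) subgroup.mem_carrier by auto
  have "inv d \<in> C"
    using kd(2) assms(4) subgroup.m_inv_closed[OF assms(2)] by blast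
  then have "x \<otimes> inv d \<in> C"
    using kd(4) subgroup.m_closed[OF assms(2)] by blast
  moreover have "x \<otimes> inv d = k"
    using kd(3) carr by (simp add: m_assoc)
  ultimately have "k \<in> D"
    using kd(1) assms(5) by auto
  then show "x \<in> D"
    unfolding kd(3) using kd(2) subgroup.m_closed[OF assms(3)] by blast
qed

lemma (in comm_group) int_pow_in_set_mult_if_not_Int_subset:
  assumes K: "subgroup K G" "K \<inter> C \<subseteq> D" and C: "subgroup C G" and a: "a \<in> carrier G"
    and "\<not> (K <#> generate G {a}) \<inter> C \<subseteq> D"
  shows "\<exists>t::int. a [^] t \<in> (K <#> C) - K"
proof -
  obtain y where y: "y \<in> K <#> generate G {a}" "y \<in> C" "y \<notin> D"
    using assms(5) by blast
  then obtain k t where kt: "k \<in> K" "y = k \<otimes> a [^] (t::int)"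
    unfolding set_mult_def generate_pow[OF a] by blast
  have carr: "k \<in> carrier G" "y \<in> carrier G"
    using subgroup.mem_carrier[OF K(1) kt(1)] subgroup.mem_carrier[OF C y(2)] by auto
  have "a [^] t = inv k \<otimes> y"
    using inv_solve_left[of "a [^] t" k y] carr a kt(2) by simp
  then have "a [^] t \<in> K <#> C"
    unfolding set_mult_def using subgroup.m_inv_closed[OF K(1) kt(1)] y(2) by blast
  moreover have "a [^] t \<notin> K"
  proof
    assume "a [^] t \<in> K"
    then have "y \<in> K"
      unfolding kt(2) using subgroup.m_closed[OF K(1) kt(1)] by blast
    then show False
      using y(2,3) K(2) by blast
  qed
  ultimately show ?thesis
    by blast
qed

text \<open>K is a Zorn-maximal subgroup among those containing E and meeting C only inside D.\<close>

lemma (in comm_group) exists_maximal_subgroup_Int_subset: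
  assumes C: "subgroup C G" and E: "subgroup E G" "E \<inter> C \<subseteq> D"
  obtains K where "subgroup K G" "E \<subseteq> K" "K \<inter> C \<subseteq> D"
    "\<And>a. a \<in> carrier G \<Longrightarrow> a \<in> K \<or> (\<exists>t::int. a [^] t \<in> (K <#> C) - K)"
proof -
  define AA where "AA = {K. subgroup K G \<and> E \<subseteq> K \<and> K \<inter> C \<subseteq> D}"
  have "\<Union>CC \<in> AA" if "CC \<noteq> {}" "subset.chain AA CC" for CC
  proof -
    have "subset.chain {K. subgroup K G} CC"
      using that(2) unfolding subset.chain_def AA_def by blast
    then have "subgroup (\<Union>CC) G"
      by (rule subgroup_Union_chain[OF that(1)])
    then show ?thesis
      using that unfolding subset.chain_def AA_def by blast
  qed
  moreover have "E \<in> AA"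
    unfolding AA_def using E by blast
  ultimately obtain K where "K \<in> AA" and K_max: "\<And>L. L \<in> AA \<Longrightarrow> K \<subseteq> L \<Longrightarrow> L = K"
    using subset_Zorn_nonempty[of AA] by blast
  then have K: "subgroup K G" "E \<subseteq> K" "K \<inter> C \<subseteq> D"
    unfolding AA_def by auto
  have maximal: "\<not> (K <#> generate G {a}) \<inter> C \<subseteq> D" if a: "a \<in> carrier G" "a \<notin> K" for a
  proof -
    define L where "L = K <#> generate G {a}"
    have gen: "subgroup (generate G {a}) G"
      using a by (intro generate_is_subgroup) simp
    have L: "subgroup L G" "K \<subseteq> L"
      unfolding L_def using mult_subgroups[OF K(1) gen] subset_set_mult_subgroup[OF gen]
        subgroup.subset[OF K(1)] by auto
    have "\<one> \<otimes> a \<in> L"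
      unfolding L_def set_mult_def using K(1) subgroup.one_closed generate.incl[of a "{a}" G]
      by blast
    then have "L \<noteq> K"
      using a by auto
    then show ?thesis
      using K_max[of L] L K(2) unfolding AA_def L_def by blast
  qed
  have "a \<in> K \<or> (\<exists>t::int. a [^] t \<in> (K <#> C) - K)" if "a \<in> carrier G" for a
    using int_pow_in_set_mult_if_not_Int_subset[OF K(1,3) C that] maximal[OF that] by blast
  then show thesis
    by (rule that[OF K])
qed

lemma (in comm_group) exists_pos_pow_in_set_mult:
  assumes K: "subgroup K G" and C: "subgroup C G" and a: "a \<in> carrier G"
    and "a \<in> K \<or> (\<exists>t::int. a [^] t \<in> (K <#> C) - K)"
  shows "\<exists>t>0. a [^] (t::nat) \<in> K <#> C"
proof (cases "a \<in> K")
  case True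
  then show ?thesis
    using subset_set_mult_subgroup[OF C subgroup.subset[OF K]] a
    by (intro exI[of _ 1]) auto
next
  case False
  then obtain t :: int where t: "a [^] t \<in> K <#> C" "a [^] t \<notin> K"
    using assms(4) by blast
  then have "t \<noteq> 0"
    using subgroup.one_closed[OF K] by auto
  moreover have "a [^] nat \<bar>t\<bar> \<in> K <#> C"
    by (rule subgroup_int_pow_abs_closed[OF mult_subgroups[OF K C] a t(1)])
  ultimately show ?thesis
    by (intro exI[of _ "nat \<bar>t\<bar>"]) auto
qed

lemma (in comm_group) exhausting_fact_pow_chain:
  assumes D: "mono D" "\<And>n. subgroup (D n) G" and K: "subgroup K G"
    and pos_pow: "\<And>a. a \<in> carrier G \<Longrightarrow> \<exists>t>0. a [^] (t::nat) \<in> K <#> (\<Union>j. D j)"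
  shows "exhausting_subgroup_chain G (\<lambda>n. {a \<in> carrier G. a [^] (fact n :: nat) \<in> K <#> D n})"
    (is "exhausting_subgroup_chain G ?H")
proof (intro exhausting_subgroup_chain.intro exhausting_subgroup_chain_axioms.intro is_group)
  have KD: "subgroup (K <#> D n) G" for n
    by (rule mult_subgroups[OF K D(2)])
  have KD_mono: "K <#> D m \<subseteq> K <#> D n" if "m \<le> n" for m n
    using monoD[OF D(1) that] by (simp add: mono_set_mult)
  show "subgroup (?H n) G" for n
    by (rule subgroup_pow_preimage[OF KD])
  show "mono ?H"
  proof (intro monoI subsetI)
    fix m n a assume mn: "m \<le> n" and "a \<in> ?H m"
    then have "a \<in> carrier G" "a [^] (fact m :: nat) \<in> K <#> D n"
      using KD_mono[OF mn] by auto
    then show "a \<in> ?H n"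
      using subgroup_nat_pow_dvd_closed[OF KD] fact_dvd[OF mn] by blast
  qed
  show "(\<Union>n. ?H n) = carrier G"
  proof (intro equalityI subsetI)
    fix a assume a: "a \<in> carrier G"
    obtain t :: nat where t: "t > 0" "a [^] t \<in> K <#> (\<Union>j. D j)"
      using pos_pow[OF a] by blast
    then obtain k c j where kc: "k \<in> K" "c \<in> D j" "a [^] t = k \<otimes> c"
      unfolding set_mult_def by blast
    define n where "n = max t j"
    have "a [^] t \<in> K <#> D j"
      unfolding set_mult_def using kc by blast
    then have "a [^] t \<in> K <#> D n"
      using KD_mono[of j n] unfolding n_def by auto
    moreover have "t dvd fact n"
      using t(1) unfolding n_def by (intro dvd_fact) auto
    ultimately have "a \<in> ?H n"
      using a subgroup_nat_pow_dvd_closed[OF KD a] by blast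
    then show "a \<in> (\<Union>n. ?H n)"
      by blast
  qed auto
qed

lemma (in comm_group) uncountable_cofinality_chain_fact_pow:
  assumes UC: "uncountable_cofinality G" and D: "mono D" "\<And>n. subgroup (D n) G"
  obtains n where "\<And>x. x \<in> (\<Union>j. D j) \<Longrightarrow> x [^] (fact n :: nat) \<in> D n"
proof -
  define C where "C = (\<Union>j. D j)"
  have C: "subgroup C G"
    unfolding C_def by (rule subgroup_UN_mono[OF D])
  have "{\<one>} \<inter> C \<subseteq> D 0"
    using subgroup.one_closed[OF D(2)[of 0]] by blast
  then obtain K where K: "subgroup K G" "{\<one>} \<subseteq> K" "K \<inter> C \<subseteq> D 0"
    and K_compl: "\<And>a. a \<in> carrier G \<Longrightarrow> a \<in> K \<or> (\<exists>t::int. a [^] t \<in> (K <#> C) - K)"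
    using exists_maximal_subgroup_Int_subset[OF C triv_subgroup] by blast
  interpret H: exhausting_subgroup_chain G
    "\<lambda>n. {a \<in> carrier G. a [^] (fact n :: nat) \<in> K <#> D n}"
    using exhausting_fact_pow_chain[OF D K(1)] exists_pos_pow_in_set_mult[OF K(1) C _ K_compl]
    unfolding C_def by blast
  obtain n where n: "{a \<in> carrier G. a [^] (fact n :: nat) \<in> K <#> D n} = carrier G"
    using H.exists_chain_eq_carrier[OF UC] by blast
  have "x [^] (fact n :: nat) \<in> D n" if x: "x \<in> C" for x
  proof -
    have "x [^] (fact n :: nat) \<in> K <#> D n"
      using x subgroup.subset[OF C] n by blast
    moreover have "x [^] (fact n :: nat) \<in> C"
      using subgroup_nat_pow_closed[OF C x] .
    moreover have "D n \<subseteq> C"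
      unfolding C_def by blast
    moreover have "K \<inter> C \<subseteq> D n"
      using K(3) monoD[OF D(1), of 0 n] by auto
    ultimately show ?thesis
      using set_mult_Int_subgroup_subset[OF K(1) C D(2)] by blast
  qed
  then show thesis
    using that unfolding C_def by blast
qed

lemma (in comm_group) set_mult_eq_carrier_of_prime_pow:
  assumes K: "subgroup K G" and C: "subgroup C G" and p: "Factorial_Ring.prime (p::nat)"
    and pK: "\<And>a. a \<in> carrier G \<Longrightarrow> a [^] p \<in> K"
    and K_compl: "\<And>a. a \<in> carrier G \<Longrightarrow> a \<in> K \<or> (\<exists>t::int. a [^] t \<in> (K <#> C) - K)"
  shows "K <#> C = carrier G"
proof -
  have KC: "subgroup (K <#> C) G"
    by (rule mult_subgroups[OF K C])
  have K_KC: "K \<subseteq> K <#> C"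
    by (rule subset_set_mult_subgroup[OF C subgroup.subset[OF K]])
  have "a \<in> K <#> C" if a: "a \<in> carrier G" "a \<notin> K" for a
  proof -
    obtain t :: int where t: "a [^] t \<in> K <#> C" "a [^] t \<notin> K"
      using K_compl a by blast
    have pK_int: "a [^] int p \<in> K"
      using pK[OF a(1)] by (simp add: int_pow_int)
    have "\<not> int p dvd t"
    proof
      assume "int p dvd t"
      then obtain s where "t = int p * s"
        by (rule dvdE)
      then have "a [^] t = (a [^] int p) [^] s"
        using a by (simp add: int_pow_pow)
      then show False
        using t(2) subgroup_int_pow_closed[OF K pK_int] by simp
    qed
    then have "coprime (int p) t"
      using p by (simp add: prime_imp_coprime)
    then show ?thesis
      using coprime_int_pows_in_subgroup[OF KC a(1) _ t(1)] K_KC pK_int by blast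
  qed
  then show ?thesis
    using K_KC subgroup.subset[OF KC] by blast
qed

lemma (in comm_group) uncountable_cofinality_chain_stabilizes:
  fixes D :: "nat \<Rightarrow> 'a set"
  assumes UC: "uncountable_cofinality G" and D: "mono D" "\<And>n. subgroup (D n) G"
    and K: "subgroup K G" "K \<inter> (\<Union>j. D j) \<subseteq> D 0" "K <#> (\<Union>j. D j) = carrier G"
  obtains n where "\<And>j. D j \<subseteq> D n"
proof -
  define C where "C = (\<Union>j. D j)"
  have C: "subgroup C G"
    unfolding C_def by (rule subgroup_UN_mono[OF D])
  interpret H: exhausting_subgroup_chain G "\<lambda>n. K <#> D n"
  proof (intro exhausting_subgroup_chain.intro exhausting_subgroup_chain_axioms.intro is_group)
    show "subgroup (K <#> D n) G" for n
      by (rule mult_subgroups[OF K(1) D(2)])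
    show "mono (\<lambda>n. K <#> D n)"
      using monoD[OF D(1)] by (simp add: monoI mono_set_mult)
    show "(\<Union>n. K <#> D n) = carrier G"
      unfolding K(3)[symmetric] set_mult_def by blast
  qed
  obtain n where n: "K <#> D n = carrier G"
    using H.exists_chain_eq_carrier[OF UC] by blast
  have "D j \<subseteq> D n" for j
  proof -
    have "D j \<subseteq> (K <#> D n) \<inter> C"
      unfolding n C_def using subgroup.subset[OF D(2)] by blast
    moreover have "D n \<subseteq> C"
      unfolding C_def by blast
    moreover have "K \<inter> C \<subseteq> D n"
      using K(2) monoD[OF D(1), of 0 n] unfolding C_def by auto
    ultimately show ?thesis
      using set_mult_Int_subgroup_subset[OF K(1) C D(2)] by blast
  qed
  then show thesis
    using that by blast
qed

lemma (in comm_group) uncountable_cofinality_chain_stabilizes_mod_prime: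
  fixes D :: "nat \<Rightarrow> 'a set"
  assumes UC: "uncountable_cofinality G" and D: "mono D" "\<And>n. subgroup (D n) G"
    and p: "Factorial_Ring.prime (p::nat)" and pD: "\<And>a. a \<in> carrier G \<Longrightarrow> a [^] p \<in> D 0"
  obtains n where "\<And>j. D j \<subseteq> D n"
proof -
  define C where "C = (\<Union>j. D j)"
  have C: "subgroup C G"
    unfolding C_def by (rule subgroup_UN_mono[OF D])
  define E where "E = generate G ((\<lambda>a. a [^] p) ` carrier G)"
  have E: "subgroup E G"
    unfolding E_def by (rule generate_is_subgroup) auto
  have "E \<subseteq> D 0"
    unfolding E_def using pD by (intro generate_subgroup_incl[OF _ D(2)]) auto
  then have "E \<inter> C \<subseteq> D 0"
    by blast
  then obtain K where K: "subgroup K G" "E \<subseteq> K" "K \<inter> C \<subseteq> D 0"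
    and K_compl: "\<And>a. a \<in> carrier G \<Longrightarrow> a \<in> K \<or> (\<exists>t::int. a [^] t \<in> (K <#> C) - K)"
    using exists_maximal_subgroup_Int_subset[OF C E] by blast
  have "a [^] p \<in> K" if "a \<in> carrier G" for a
    using K(2) generate.incl[of "a [^] p" "(\<lambda>a. a [^] p) ` carrier G" G] that
    unfolding E_def by blast
  then have "K <#> C = carrier G"
    by (rule set_mult_eq_carrier_of_prime_pow[OF K(1) C p _ K_compl])
  then show thesis
    using uncountable_cofinality_chain_stabilizes[OF UC D K(1)] K(3) that
    unfolding C_def by blast
qed

definition powers_in_fg_subgroup :: "('a, 'b) monoid_scheme \<Rightarrow> nat \<Rightarrow> bool" where
  "powers_in_fg_subgroup G m \<longleftrightarrow>
     (\<exists>S. finite S \<and> S \<subseteq> carrier G \<and> (\<forall>a\<in>carrier G. a [^]\<^bsub>G\<^esub> m \<in> generate G S))"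

lemma finite_insert_chain:
  assumes "finite S0" "S0 \<subseteq> U"
    and "\<And>n S. finite S \<Longrightarrow> S \<subseteq> U \<Longrightarrow> \<exists>x\<in>U. R n S x"
  obtains T where "T 0 = S0" "\<And>n. finite (T n)" "\<And>n. T n \<subseteq> U"
    "\<And>n. \<exists>x\<in>U. R n (T n) x \<and> T (Suc n) = insert x (T n)"
proof -
  define f where "f n S = (SOME x. x \<in> U \<and> R n S x)" for n S
  have f: "f n S \<in> U \<and> R n S (f n S)" if "finite S" "S \<subseteq> U" for n S
    unfolding f_def by (rule someI_ex) (use assms(3)[OF that] in blast)
  define T where "T = rec_nat S0 (\<lambda>n S. insert (f n S) S)"
  have T_0: "T 0 = S0" and T_Suc: "T (Suc n) = insert (f n (T n)) (T n)" for n
    unfolding T_def by simp_all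
  have T_fin: "finite (T n) \<and> T n \<subseteq> U" for n
    by (induction n) (use assms(1,2) f in \<open>auto simp: T_0 T_Suc\<close>)
  show thesis
  proof (rule that)
    show "\<exists>x\<in>U. R n (T n) x \<and> T (Suc n) = insert x (T n)" for n
      using f[of "T n" n] T_fin[of n] T_Suc[of n] by blast
  qed (use T_0 T_fin in auto)
qed

lemma (in comm_group) uncountable_cofinality_imp_powers_in_fg_subgroup:
  assumes UC: "uncountable_cofinality G"
  shows "\<exists>m>0. powers_in_fg_subgroup G m"
proof (rule ccontr)
  assume "\<not> ?thesis"
  then have "\<not> powers_in_fg_subgroup G (fact n)" for n
    by (metis fact_gt_zero)
  then have escape: "\<exists>x\<in>carrier G. x [^] (fact n :: nat) \<notin> generate G S"
    if "finite S" "S \<subseteq> carrier G" for n S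
    using that unfolding powers_in_fg_subgroup_def by blast
  obtain T where "T 0 = {}" and T: "\<And>n. finite (T n)" "\<And>n. T n \<subseteq> carrier G"
    "\<And>n. \<exists>x\<in>carrier G. x [^] (fact n :: nat) \<notin> generate G (T n) \<and> T (Suc n) = insert x (T n)"
    using finite_insert_chain[where R = "\<lambda>n S x. x [^] (fact n :: nat) \<notin> generate G S",
        OF finite.emptyI empty_subsetI escape] by blast
  define D where "D n = generate G (T n)" for n
  have "T n \<subseteq> T (Suc n)" for n
    using T(3)[of n] by blast
  then have "mono D"
    unfolding mono_iff_le_Suc D_def by (simp add: mono_generate)
  moreover have "subgroup (D n) G" for n
    unfolding D_def using T(2) by (rule generate_is_subgroup)
  ultimately obtain n where n: "\<And>x. x \<in> (\<Union>j. D j) \<Longrightarrow> x [^] (fact n :: nat) \<in> D n"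
    using uncountable_cofinality_chain_fact_pow[OF UC] by blast
  obtain x where x: "x [^] (fact n :: nat) \<notin> D n" "T (Suc n) = insert x (T n)"
    using T(3) unfolding D_def by blast
  have "x \<in> D (Suc n)"
    unfolding D_def x(2) by (rule generate.incl) simp
  then show False
    using n x(1) by blast
qed

lemma (in comm_group) powers_in_fg_subgroup_cancel_prime:
  assumes UC: "uncountable_cofinality G" and p: "Factorial_Ring.prime p"
    and "powers_in_fg_subgroup G (p * m)"
  shows "powers_in_fg_subgroup G m"
proof (rule ccontr)
  obtain S where S: "finite S" "S \<subseteq> carrier G"
    "\<And>a. a \<in> carrier G \<Longrightarrow> a [^] (p * m) \<in> generate G S"
    using assms(3) unfolding powers_in_fg_subgroup_def by blast
  assume "\<not> powers_in_fg_subgroup G m"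
  then have escape: "\<exists>y\<in>carrier G. y \<notin> generate G S' \<and> y \<in> (\<lambda>x. x [^] m) ` carrier G"
    if "finite S'" "S' \<subseteq> carrier G" for S'
    using that unfolding powers_in_fg_subgroup_def by blast
  obtain T where T: "T 0 = S" "\<And>n. finite (T n)" "\<And>n. T n \<subseteq> carrier G"
    "\<And>n. \<exists>y\<in>carrier G. (y \<notin> generate G (T n) \<and> y \<in> (\<lambda>x. x [^] m) ` carrier G)
       \<and> T (Suc n) = insert y (T n)"
    using finite_insert_chain[where R = "\<lambda>n S' y. y \<notin> generate G S' \<and> y \<in> (\<lambda>x. x [^] m) ` carrier G",
        OF S(1,2) escape] by blast
  define D where "D n = {a \<in> carrier G. a [^] m \<in> generate G (T n)}" for n
  have "T n \<subseteq> T (Suc n)" for n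
    using T(4)[of n] by blast
  then have "generate G (T n) \<subseteq> generate G (T (Suc n))" for n
    by (rule mono_generate)
  then have "mono D"
    unfolding mono_iff_le_Suc D_def by blast
  moreover have "subgroup (D n) G" for n
    unfolding D_def using generate_is_subgroup[OF T(3)] by (rule subgroup_pow_preimage)
  moreover have "a [^] p \<in> D 0" if "a \<in> carrier G" for a
    unfolding D_def T(1) using S(3)[OF that] that by (simp add: nat_pow_pow)
  ultimately obtain n where n: "\<And>j. D j \<subseteq> D n"
    using uncountable_cofinality_chain_stabilizes_mod_prime[OF UC _ _ p] by blast
  obtain x where x: "x \<in> carrier G" "x [^] m \<notin> generate G (T n)"
    "T (Suc n) = insert (x [^] m) (T n)"
    using T(4) by blast
  have "x \<in> D (Suc n)"
    unfolding D_def x(3) using x(1) by (auto intro: generate.incl)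
  then show False
    using n x(2) unfolding D_def by blast
qed

lemma (in comm_group) uncountable_cofinality_powers_in_fg_subgroup_one:
  assumes UC: "uncountable_cofinality G" and "m > 0" "powers_in_fg_subgroup G m"
  shows "powers_in_fg_subgroup G 1"
  using assms(2,3)
proof (induction m rule: less_induct)
  case (less m)
  show ?case
  proof (cases "m = 1")
    case True
    then show ?thesis
      using less.prems(2) by simp
  next
    case False
    then obtain p where p: "Factorial_Ring.prime p" "p dvd m"
      using prime_factor_nat by blast
    from p(2) obtain m' where m: "m = p * m'"
      by (rule dvdE)
    have "0 < m'" "m' < m"
      using less.prems(1) prime_gt_1_nat[OF p(1)] unfolding m by auto
    moreover have "powers_in_fg_subgroup G m'"
      using powers_in_fg_subgroup_cancel_prime[OF UC p(1)] less.prems(2) unfolding m .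
    ultimately show ?thesis
      using less.IH by blast
  qed
qed

lemma (in group) powers_in_fg_subgroup_one_imp_finitely_generated:
  assumes "powers_in_fg_subgroup G 1"
  shows "finitely_generated G"
proof -
  obtain S where S: "finite S" "S \<subseteq> carrier G"
    "\<And>a. a \<in> carrier G \<Longrightarrow> a [^] (1::nat) \<in> generate G S"
    using assms unfolding powers_in_fg_subgroup_def by blast
  have "carrier G \<subseteq> generate G S"
    using S(3) by (simp add: subset_iff)
  then have "generate G S = carrier G"
    using generate_incl[OF S(2)] by (rule subset_antisym[rotated])
  then show ?thesis
    unfolding finitely_generated_def using S(1,2) by blast
qed

lemma (in comm_group) uncountable_cofinality_imp_finitely_generated:
  assumes "uncountable_cofinality G"
  shows "finitely_generated G"
  using uncountable_cofinality_imp_powers_in_fg_subgroup[OF assms]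
    uncountable_cofinality_powers_in_fg_subgroup_one[OF assms]
    powers_in_fg_subgroup_one_imp_finitely_generated
  by blast

theorem proposition2p7:
  fixes A :: "('a, 'b) monoid_scheme"
  assumes "comm_group A"
  shows "(finitely_generated A \<longleftrightarrow> SB_generated A) \<and>
         (SB_generated A \<longleftrightarrow> uncountable_cofinality A)"
proof -
  interpret comm_group A
    by (rule assms)
  show ?thesis
    using finitely_generated_imp_SB_generated SB_generated_imp_uncountable_cofinality
      uncountable_cofinality_imp_finitely_generated by blast
qed

end
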